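(* Let $(A_1,X_1)$ and $(A_2,X_2)$ be two graphs (with $n_1$ and $n_2$ nodes) that cannot be distinguished by the 1-WL algorithm. Consider a DiffPool pooling layer with $c$ clusters, $S = \mathrm{gnn}_c(A,X)\in\mathbb{R}^{n\times c}$, $H=\mathrm{gnn}_r(A,X)$, where $\mathrm{gnn}_c$ and $\mathrm{gnn}_r$ are 1-WL-bounded GNNs, and whose outputs are the coarsened adjacency matrix $S^\top A S$ and the pooled features $S^\top H$ (the paper writes the layer output as $H' = S^\top A S\, S^\top H$). Then $S_1^\top A_1 S_1 = S_2^\top A_2 S_2$ and $S_1^\top H_1 = S_2^\top H_2$ (hence also $S_1^\top A_1 S_1 S_1^\top H_1 = S_2^\top A_2 S_2 S_2^\top H_2$). Consequently, any DiffPool network consisting of such pooling layers (with intermediate GNN layers) followed by a permutation-invariant readout computes the same vector representation for the two graphs.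
   Context: A graph with $n$ nodes is given by an adjacency matrix $A\in\{0,1\}^{n\times n}$ (symmetric) and node features $X\in\mathbb{R}^{n\times d}$. The 1-WL (color refinement) algorithm starts from initial colors given by node features and iteratively recolors each node by the pair (its current color, multiset of current colors of its neighbors) until the partition is stable. Two graphs "cannot be distinguished by the 1-WL algorithm" means: running 1-WL on their disjoint union, every stable color class contains the same number of nodes from each graph. A node-level map $f$, $(A,X)\mapsto f(A,X)\in\mathbb{R}^{n\times d'}$, is called 1-WL-bounded if the representation it assigns to a node depends only on the node's stable 1-WL color (computed on the disjoint union of any graphs under consideration); standard message-passing GNNs (e.g. GIN, GCN) are of this type, and row-wise functions such as a row-wise softmax of such outputs remain of this type. *)

theory Defs
  imports "HOL-Analysis.Analysis" "HOL-Library.Multiset"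
begin

text \<open>A graph with nodes 0,...,nv-1, adjacency relation (0/1 matrix A) and
  node features X (row i is a vector in R^d, the dimension d being the finite type 'd).\<close>
record 'd graph =
  nv   :: nat
  adj  :: "nat \<Rightarrow> nat \<Rightarrow> bool"
  feat :: "nat \<Rightarrow> real ^ 'd"

definition wf_graph :: "('d::finite) graph \<Rightarrow> bool" where
  "wf_graph G \<longleftrightarrow> (\<forall>i j. adj G i j = adj G j i)"

definition nbrs :: "('d::finite) graph \<Rightarrow> nat \<Rightarrow> nat set" where
  "nbrs G v = {u. u < nv G \<and> adj G v u}"

definition disj_union :: "('d::finite) graph \<Rightarrow> 'd graph \<Rightarrow> 'd graph" where
  "disj_union G H =
     \<lparr> nv = nv G + nv H,
       adj = (\<lambda>i j. (i < nv G \<and> j < nv G \<and> adj G i j) \<or>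
                     (nv G \<le> i \<and> nv G \<le> j \<and> adj H (i - nv G) (j - nv G))),
       feat = (\<lambda>i. if i < nv G then feat G i else feat H (i - nv G)) \<rparr>"

datatype 'f wlcol = Init 'f | Refine "'f wlcol" "'f wlcol multiset"

fun wl_color :: "('d::finite) graph \<Rightarrow> nat \<Rightarrow> nat \<Rightarrow> (real ^ 'd) wlcol" where
  "wl_color G 0 v = Init (feat G v)"
| "wl_color G (Suc t) v =
     Refine (wl_color G t v) (image_mset (wl_color G t) (mset_set (nbrs G v)))"

text \<open>Same stable 1-WL colour: the refinement sequence of partitions is monotone and
  stabilises, so the stable partition is the intersection of all rounds.\<close>
definition wl_equiv :: "('d::finite) graph \<Rightarrow> nat \<Rightarrow> nat \<Rightarrow> bool" where
  "wl_equiv G u v \<longleftrightarrow> (\<forall>t. wl_color G t u = wl_color G t v)"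

definition wl_indist :: "('d::finite) graph \<Rightarrow> 'd graph \<Rightarrow> bool" where
  "wl_indist G H \<longleftrightarrow>
     (let U = disj_union G H in
      \<forall>v < nv U. card {i. i < nv G \<and> wl_equiv U i v} =
                 card {i. nv G \<le> i \<and> i < nv G + nv H \<and> wl_equiv U i v})"

definition wl_bounded :: "(('d::finite) graph \<Rightarrow> nat \<Rightarrow> 'o) \<Rightarrow> bool" where
  "wl_bounded f \<longleftrightarrow>
     (\<forall>G H u v. wf_graph G \<longrightarrow> wf_graph H \<longrightarrow> u < nv G \<longrightarrow> v < nv H \<longrightarrow>
        wl_equiv (disj_union G H) u (nv G + v) \<longrightarrow> f G u = f H v)"

text \<open>S^T A S for S given row-wise (S i = row i, in R^c).\<close>
definition coarse_adj :: "('d::finite) graph \<Rightarrow> (nat \<Rightarrow> real ^ 'c) \<Rightarrow> real ^ 'c ^ 'c" where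
  "coarse_adj G S = (\<chi> p q. \<Sum>i<nv G. \<Sum>j<nv G.
       S i $ p * (if adj G i j then 1 else 0) * S j $ q)"

text \<open>S^T H for S, H given row-wise.\<close>
definition pooled_feat :: "('d::finite) graph \<Rightarrow> (nat \<Rightarrow> real ^ 'c) \<Rightarrow> (nat \<Rightarrow> real ^ 'h) \<Rightarrow> real ^ 'h ^ 'c" where
  "pooled_feat G S H = (\<chi> p k. \<Sum>i<nv G. S i $ p * H i $ k)"

end

theory Submission
  imports Defs
begin

text \<open>Both outputs of the pooling layer are sums over the nodes i of a graph, of S i p * H i k
  and of S i p * (sum of S j q over the neighbours j of i). The summands depend only on the stable
  1-WL colour of i: for S and H this is 1-WL-boundedness, and a neighbourhood sum of a
  colour-invariant quantity is again colour-invariant, because the stable colour of a node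
  determines the multiset of stable colours of its neighbours. Since every colour class of the
  disjoint union contains equally many nodes of the two graphs, the sum of a colour-invariant
  quantity over the nodes of one graph equals its sum over the nodes of the other.\<close>

lemma sum_eq_sum_if_card_eq_and_constant:
  fixes F :: "'a \<Rightarrow> 'b::comm_monoid_add"
  assumes "finite X" "finite Y" "card X = card Y"
    and "\<And>x y. x \<in> X \<union> Y \<Longrightarrow> y \<in> X \<union> Y \<Longrightarrow> F x = F y"
  shows "sum F X = sum F Y"
proof -
  obtain h where h: "bij_betw h X Y"
    using finite_same_card_bij assms(1-3) by blast
  have "sum F Y = (\<Sum>x\<in>X. F (h x))"
    using sum.reindex_bij_betw[OF h, of F] by simp
  also have "\<dots> = sum F X"
    using h assms(4) by (intro sum.cong) (auto dest: bij_betw_apply)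
  finally show ?thesis by simp
qed

lemma sum_eq_sum_if_fibre_card_eq:
  fixes F :: "'a \<Rightarrow> 'b::comm_monoid_add"
  assumes fin: "finite A" "finite B"
    and const: "\<And>x y. x \<in> A \<union> B \<Longrightarrow> y \<in> A \<union> B \<Longrightarrow> k x = k y \<Longrightarrow> F x = F y"
    and card: "\<And>v. v \<in> A \<union> B \<Longrightarrow> card {x\<in>A. k x = k v} = card {x\<in>B. k x = k v}"
  shows "sum F A = sum F B"
proof -
  have "sum F A = (\<Sum>c\<in>k ` (A \<union> B). sum F {x\<in>A. k x = c})"
    using fin by (intro sum.group[symmetric]) auto
  also have "\<dots> = (\<Sum>c\<in>k ` (A \<union> B). sum F {x\<in>B. k x = c})"
  proof (rule sum.cong[OF refl])
    fix c assume "c \<in> k ` (A \<union> B)"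
    then obtain v where "v \<in> A \<union> B" "c = k v" by blast
    then show "sum F {x\<in>A. k x = c} = sum F {x\<in>B. k x = c}"
      using fin card const by (intro sum_eq_sum_if_card_eq_and_constant) auto
  qed
  also have "\<dots> = sum F B"
    using fin by (intro sum.group) auto
  finally show ?thesis .
qed

lemma count_image_mset_mset_set:
  "finite A \<Longrightarrow> count (image_mset f (mset_set A)) c = card {x\<in>A. f x = c}"
  by (simp add: count_image_mset_eq_card_vimage Int_def conj_commute)

lemma wl_color_eq_earlier:
  "wl_color G (t + m) x = wl_color G (t + m) y \<Longrightarrow> wl_color G t x = wl_color G t y"
  by (induction m) auto

text \<open>Each of the finitely many pairs of inequivalent nodes is separated in some round; by
  monotonicity of the refinement, the latest of these rounds separates all of them.\<close>
lemma wl_color_stabilises: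
  assumes "finite V"
  shows "\<exists>T. \<forall>x\<in>V. \<forall>y\<in>V. wl_color G T x = wl_color G T y \<longrightarrow> wl_equiv G x y"
proof -
  define P where "P = {(x, y) \<in> V \<times> V. \<not> wl_equiv G x y}"
  have "finite P"
    using assms unfolding P_def by (auto intro: finite_subset[of _ "V \<times> V"])
  have "\<forall>p\<in>P. \<exists>t. wl_color G t (fst p) \<noteq> wl_color G t (snd p)"
    unfolding P_def wl_equiv_def by auto
  then obtain f where f: "\<forall>p\<in>P. wl_color G (f p) (fst p) \<noteq> wl_color G (f p) (snd p)"
    by metis
  define T where "T = Max (insert 0 (f ` P))"
  have "wl_equiv G x y" if "x \<in> V" "y \<in> V" "wl_color G T x = wl_color G T y" for x y
  proof (rule ccontr)
    assume "\<not> wl_equiv G x y"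
    then have xy: "(x, y) \<in> P" using that by (simp add: P_def)
    then have "f (x, y) \<le> T" unfolding T_def using \<open>finite P\<close> by simp
    then obtain m where "T = f (x, y) + m" using le_Suc_ex by blast
    then have "wl_color G (f (x, y)) x = wl_color G (f (x, y)) y"
      using that(3) wl_color_eq_earlier by metis
    then show False using f xy by auto
  qed
  then show ?thesis by blast
qed

definition wl_invariant :: "('d::finite) graph \<Rightarrow> (nat \<Rightarrow> 'o) \<Rightarrow> bool" where
  "wl_invariant G F \<longleftrightarrow> (\<forall>x<nv G. \<forall>y<nv G. wl_equiv G x y \<longrightarrow> F x = F y)"

lemma wl_invariant_sum_nbrs:
  fixes F :: "nat \<Rightarrow> 'b::comm_monoid_add"
  assumes inv: "wl_invariant G F"
  shows "wl_invariant G (\<lambda>x. \<Sum>j\<in>nbrs G x. F j)"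
  unfolding wl_invariant_def
proof (intro allI impI)
  obtain T where T: "\<forall>x\<in>{..<nv G}. \<forall>y\<in>{..<nv G}.
      wl_color G T x = wl_color G T y \<longrightarrow> wl_equiv G x y"
    using wl_color_stabilises by blast
  have nbrs: "nbrs G x \<subseteq> {..<nv G}" "finite (nbrs G x)" for x
    by (auto simp: nbrs_def)
  fix x y assume "x < nv G" "y < nv G" "wl_equiv G x y"
  then have "wl_color G (Suc T) x = wl_color G (Suc T) y"
    unfolding wl_equiv_def by blast
  then have same_mset: "image_mset (wl_color G T) (mset_set (nbrs G x))
      = image_mset (wl_color G T) (mset_set (nbrs G y))"
    by simp
  show "(\<Sum>j\<in>nbrs G x. F j) = (\<Sum>j\<in>nbrs G y. F j)"
  proof (rule sum_eq_sum_if_fibre_card_eq[where k = "wl_color G T"])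
    show "finite (nbrs G x)" "finite (nbrs G y)"
      by (simp_all add: nbrs)
    show "F a = F b"
      if "a \<in> nbrs G x \<union> nbrs G y" "b \<in> nbrs G x \<union> nbrs G y"
        "wl_color G T a = wl_color G T b" for a b
      using that nbrs T inv unfolding wl_invariant_def by blast
    show "card {j\<in>nbrs G x. wl_color G T j = wl_color G T v}
        = card {j\<in>nbrs G y. wl_color G T j = wl_color G T v}" for v
      using same_mset count_image_mset_mset_set[OF nbrs(2)] by metis
  qed
qed

lemma nv_disj_union [simp]: "nv (disj_union G H) = nv G + nv H"
  by (simp add: disj_union_def)

lemma nbrs_disj_union_left: "i < nv G \<Longrightarrow> nbrs (disj_union G H) i = nbrs G i"
  by (auto simp: nbrs_def disj_union_def)

lemma nbrs_disj_union_right: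
  "nbrs (disj_union G H) (nv G + v) = (\<lambda>j. nv G + j) ` nbrs H v"
proof (rule set_eqI)
  fix x
  have "x \<in> nbrs (disj_union G H) (nv G + v) \<longleftrightarrow>
      nv G \<le> x \<and> x - nv G \<in> nbrs H v"
    by (auto simp: nbrs_def disj_union_def)
  also have "\<dots> \<longleftrightarrow> x \<in> (\<lambda>j. nv G + j) ` nbrs H v"
    by (auto simp: image_iff) (metis le_add_diff_inverse)
  finally show "x \<in> nbrs (disj_union G H) (nv G + v) \<longleftrightarrow> x \<in> (\<lambda>j. nv G + j) ` nbrs H v" .
qed

definition disj_union_fun ::
    "(('d::finite) graph \<Rightarrow> nat \<Rightarrow> 'o) \<Rightarrow> 'd graph \<Rightarrow> 'd graph \<Rightarrow> nat \<Rightarrow> 'o" where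
  "disj_union_fun f G H z = (if z < nv G then f G z else f H (z - nv G))"

lemma disj_union_fun_left [simp]: "i < nv G \<Longrightarrow> disj_union_fun f G H i = f G i"
  by (simp add: disj_union_fun_def)

lemma disj_union_fun_right [simp]: "disj_union_fun f G H (nv G + v) = f H v"
  by (simp add: disj_union_fun_def)

lemma wl_indist_class_meets_both:
  assumes "wl_indist G H" "v < nv G + nv H"
  obtains a b where "a < nv G" "wl_equiv (disj_union G H) a v"
    and "nv G \<le> b" "b < nv G + nv H" "wl_equiv (disj_union G H) b v"
proof -
  let ?U = "disj_union G H"
  let ?left = "{i. i < nv G \<and> wl_equiv ?U i v}"
  let ?right = "{i. nv G \<le> i \<and> i < nv G + nv H \<and> wl_equiv ?U i v}"
  have "card ?left = card ?right"
    using assms unfolding wl_indist_def Let_def by simp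
  moreover have "v \<in> ?left \<or> v \<in> ?right"
    using assms(2) by (auto simp: wl_equiv_def)
  moreover have "finite ?left" "finite ?right"
    by auto
  ultimately have "?left \<noteq> {}" "?right \<noteq> {}"
    by (metis card_0_eq empty_iff)+
  then show ?thesis using that by blast
qed

lemma wl_equiv_sym: "wl_equiv G x y \<Longrightarrow> wl_equiv G y x"
  by (simp add: wl_equiv_def)

lemma wl_equiv_trans: "wl_equiv G x y \<Longrightarrow> wl_equiv G y z \<Longrightarrow> wl_equiv G x z"
  by (simp add: wl_equiv_def)

lemma wl_invariant_disj_union_fun:
  assumes wf: "wf_graph G" "wf_graph H" and ind: "wl_indist G H" and bounded: "wl_bounded f"
  shows "wl_invariant (disj_union G H) (disj_union_fun f G H)"
proof -
  let ?U = "disj_union G H" and ?g = "disj_union_fun f G H"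
  have cross: "?g a = ?g b"
    if a: "a < nv G" and b: "nv G \<le> b" "b < nv G + nv H" and ab: "wl_equiv ?U a b" for a b
  proof -
    obtain v where v: "b = nv G + v" "v < nv H"
      using b by (metis add_less_cancel_left le_Suc_ex)
    then have "f G a = f H v"
      using bounded wf a ab unfolding wl_bounded_def by blast
    then show ?thesis using a v by simp
  qed
  have to_right: "?g z = ?g b"
    if z: "z < nv G + nv H" and b: "nv G \<le> b" "b < nv G + nv H" and zb: "wl_equiv ?U z b"
    for z b
  proof (cases "z < nv G")
    case True
    then show ?thesis using cross b zb by blast
  next
    case False
    obtain a where a: "a < nv G" "wl_equiv ?U a z"
      using wl_indist_class_meets_both[OF ind z] by blast
    have "?g a = ?g z"
      using cross[OF a(1) _ z a(2)] False by simp
    moreover have "?g a = ?g b"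
      using cross[OF a(1) b wl_equiv_trans[OF a(2) zb]] .
    ultimately show ?thesis by simp
  qed
  show ?thesis unfolding wl_invariant_def
  proof (intro allI impI)
    fix x y assume x: "x < nv ?U" and y: "y < nv ?U" and xy: "wl_equiv ?U x y"
    obtain b where b: "nv G \<le> b" "b < nv G + nv H" "wl_equiv ?U b x"
      using wl_indist_class_meets_both[OF ind] x by auto
    have "wl_equiv ?U x b" "wl_equiv ?U y b"
      using b(3) xy by (auto intro: wl_equiv_sym wl_equiv_trans)
    then show "?g x = ?g y"
      using to_right[OF _ b(1,2)] x y by simp
  qed
qed

lemma sum_left_eq_sum_right_if_wl_indist:
  fixes F :: "nat \<Rightarrow> 'b::comm_monoid_add"
  assumes ind: "wl_indist G H" and inv: "wl_invariant (disj_union G H) F"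
  shows "(\<Sum>i<nv G. F i) = (\<Sum>v<nv H. F (nv G + v))"
proof -
  let ?U = "disj_union G H"
  define k where "k x = (\<lambda>t. wl_color ?U t x)" for x
  have k_eq: "k x = k y \<longleftrightarrow> wl_equiv ?U x y" for x y
    by (simp add: k_def wl_equiv_def fun_eq_iff)
  have "(\<Sum>i<nv G. F i) = (\<Sum>i\<in>{nv G..<nv G + nv H}. F i)"
  proof (rule sum_eq_sum_if_fibre_card_eq[where k = k])
    show "F x = F y"
      if "x \<in> {..<nv G} \<union> {nv G..<nv G + nv H}" "y \<in> {..<nv G} \<union> {nv G..<nv G + nv H}"
        "k x = k y" for x y
      using that inv k_eq unfolding wl_invariant_def by auto
    show "card {x\<in>{..<nv G}. k x = k v} = card {x\<in>{nv G..<nv G + nv H}. k x = k v}"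
      if "v \<in> {..<nv G} \<union> {nv G..<nv G + nv H}" for v
      using that ind unfolding k_eq wl_indist_def Let_def by (auto simp: conj_assoc)
  qed auto
  also have "\<dots> = (\<Sum>v<nv H. F (nv G + v))"
    using sum.shift_bounds_nat_ivl[of F 0 "nv G" "nv H"]
    by (simp add: add.commute lessThan_atLeast0)
  finally show ?thesis .
qed

lemma coarse_adj_nth:
  "coarse_adj G S $ p $ q = (\<Sum>i<nv G. S i $ p * (\<Sum>j\<in>nbrs G i. S j $ q))"
proof -
  have "(\<Sum>j\<in>nbrs G i. S j $ q) = (\<Sum>j<nv G. if adj G i j then S j $ q else 0)" for i
    unfolding nbrs_def by (simp add: sum.inter_filter[symmetric] conj_commute)
  then show ?thesis
    by (auto simp: coarse_adj_def sum_distrib_left intro!: sum.cong)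
qed

lemma coarse_adj_nth_disj_union_left:
  fixes f :: "('d::finite) graph \<Rightarrow> nat \<Rightarrow> real ^ 'c"
  shows "coarse_adj G (f G) $ p $ q
       = (\<Sum>i<nv G. disj_union_fun f G H i $ p *
            (\<Sum>j\<in>nbrs (disj_union G H) i. disj_union_fun f G H j $ q))"
proof -
  have "(\<Sum>j\<in>nbrs (disj_union G H) i. disj_union_fun f G H j $ q) = (\<Sum>j\<in>nbrs G i. f G j $ q)"
    if "i < nv G" for i
    unfolding nbrs_disj_union_left[OF that] by (intro sum.cong) (auto simp: nbrs_def)
  then show ?thesis
    unfolding coarse_adj_nth by simp
qed

lemma coarse_adj_nth_disj_union_right:
  fixes f :: "('d::finite) graph \<Rightarrow> nat \<Rightarrow> real ^ 'c"
  shows "coarse_adj H (f H) $ p $ q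
       = (\<Sum>v<nv H. disj_union_fun f G H (nv G + v) $ p *
            (\<Sum>j\<in>nbrs (disj_union G H) (nv G + v). disj_union_fun f G H j $ q))"
  unfolding coarse_adj_nth nbrs_disj_union_right
  by (simp add: sum.reindex)

lemma coarse_adj_eq_if_wl_indist:
  fixes f :: "('d::finite) graph \<Rightarrow> nat \<Rightarrow> real ^ 'c"
  assumes "wf_graph G" "wf_graph H" and ind: "wl_indist G H" and "wl_bounded f"
  shows "coarse_adj G (f G) = coarse_adj H (f H)"
proof -
  let ?U = "disj_union G H" and ?g = "disj_union_fun f G H"
  have inv: "wl_invariant ?U ?g"
    using assms by (rule wl_invariant_disj_union_fun)
  have "coarse_adj G (f G) $ p $ q = coarse_adj H (f H) $ p $ q" for p q
  proof -
    define F where "F x = ?g x $ p * (\<Sum>j\<in>nbrs ?U x. ?g j $ q)" for x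
    have "wl_invariant ?U (\<lambda>x. \<Sum>j\<in>nbrs ?U x. ?g j $ q)"
      using inv by (intro wl_invariant_sum_nbrs) (simp add: wl_invariant_def)
    then have "wl_invariant ?U F"
      using inv unfolding wl_invariant_def F_def by simp
    have "coarse_adj G (f G) $ p $ q = (\<Sum>i<nv G. F i)"
      unfolding F_def by (rule coarse_adj_nth_disj_union_left)
    also have "\<dots> = (\<Sum>v<nv H. F (nv G + v))"
      using ind \<open>wl_invariant ?U F\<close> by (rule sum_left_eq_sum_right_if_wl_indist)
    also have "\<dots> = coarse_adj H (f H) $ p $ q"
      unfolding F_def by (rule coarse_adj_nth_disj_union_right[symmetric])
    finally show ?thesis .
  qed
  then show ?thesis by (simp add: vec_eq_iff)
qed

lemma pooled_feat_eq_if_wl_indist: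
  fixes f :: "('d::finite) graph \<Rightarrow> nat \<Rightarrow> real ^ 'c"
    and f' :: "('d::finite) graph \<Rightarrow> nat \<Rightarrow> real ^ 'h"
  assumes "wf_graph G" "wf_graph H" and ind: "wl_indist G H"
    and "wl_bounded f" "wl_bounded f'"
  shows "pooled_feat G (f G) (f' G) = pooled_feat H (f H) (f' H)"
proof -
  let ?U = "disj_union G H" and ?g = "disj_union_fun f G H" and ?g' = "disj_union_fun f' G H"
  have "wl_invariant ?U ?g" "wl_invariant ?U ?g'"
    using assms by (auto intro: wl_invariant_disj_union_fun)
  then have "wl_invariant ?U (\<lambda>x. ?g x $ p * ?g' x $ k)" for p k
    unfolding wl_invariant_def by simp
  then have "(\<Sum>i<nv G. ?g i $ p * ?g' i $ k) = (\<Sum>v<nv H. ?g (nv G + v) $ p * ?g' (nv G + v) $ k)"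
    for p k
    using ind by (intro sum_left_eq_sum_right_if_wl_indist)
  then show ?thesis
    by (simp add: pooled_feat_def vec_eq_iff)
qed

theorem theorem1:
  fixes G1 G2 :: "('d::finite) graph"
    and gnn_c :: "('d::finite) graph \<Rightarrow> nat \<Rightarrow> real ^ 'c"
    and gnn_r :: "('d::finite) graph \<Rightarrow> nat \<Rightarrow> real ^ 'h"
  assumes "wf_graph G1" and "wf_graph G2"
    and "wl_indist G1 G2"
    and "wl_bounded gnn_c" and "wl_bounded gnn_r"
  shows "coarse_adj G1 (gnn_c G1) = coarse_adj G2 (gnn_c G2)
       \<and> pooled_feat G1 (gnn_c G1) (gnn_r G1) = pooled_feat G2 (gnn_c G2) (gnn_r G2)
       \<and> coarse_adj G1 (gnn_c G1) ** pooled_feat G1 (gnn_c G1) (gnn_r G1)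
         = coarse_adj G2 (gnn_c G2) ** pooled_feat G2 (gnn_c G2) (gnn_r G2)
       \<and> (\<forall>net :: real ^ 'c ^ 'c \<Rightarrow> real ^ 'h ^ 'c \<Rightarrow> 'r.
            net (coarse_adj G1 (gnn_c G1)) (pooled_feat G1 (gnn_c G1) (gnn_r G1))
          = net (coarse_adj G2 (gnn_c G2)) (pooled_feat G2 (gnn_c G2) (gnn_r G2)))"
proof -
  have "coarse_adj G1 (gnn_c G1) = coarse_adj G2 (gnn_c G2)"
    using assms(1-4) by (rule coarse_adj_eq_if_wl_indist)
  moreover have "pooled_feat G1 (gnn_c G1) (gnn_r G1) = pooled_feat G2 (gnn_c G2) (gnn_r G2)"
    using assms by (rule pooled_feat_eq_if_wl_indist)
  ultimately show ?thesis by simp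
qed

end
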